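(* Let $v_1,\ldots,v_k$ be unit vectors in $\mathbb{R}^n$ for some $k \in \mathbb{N}$, and let $S = \mathrm{span}\lbrace v_1,\ldots,v_k\rbrace$. Let $\mathcal{F}$ denote the set of all matrices $F$ whose columns are the vectors of a maximal linearly independent subset $\lbrace f_1,\ldots,f_r\rbrace \subset \lbrace v_1,\ldots,v_k\rbrace$. Let $Q = (I - v_kv_k')(I - v_{k-1}v_{k-1}')\cdots(I - v_1v_1')$. Then $$\sup_{y \in S,\ \|y\|_2 = 1} \|Qy\|_2 \leq \sqrt{1 - \min_{F\in\mathcal{F}} \det(F'F)}.$$
   Context: $'$ denotes transpose; $I$ is the $n\times n$ identity. *)

theory Defs
  imports "HOL-Analysis.Analysis" "Jordan_Normal_Form.Determinant"
begin

definition outer_sq :: "real^'n \<Rightarrow> real^'n^'n" where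
  "outer_sq v = (\<chi> i j. v $ i * v $ j)"

text \<open>Q_m = (I - v_m v_m')(I - v_(m-1) v_(m-1)') ... (I - v_1 v_1'); vectors indexed from 1.\<close>
fun Qprod :: "(nat \<Rightarrow> real^'n) \<Rightarrow> nat \<Rightarrow> real^'n^'n" where
  "Qprod v 0 = Finite_Cartesian_Product.mat 1"
| "Qprod v (Suc m) = (Finite_Cartesian_Product.mat 1 - outer_sq (v (Suc m))) ** Qprod v m"

text \<open>For a matrix F with columns fs!0,...,fs!(r-1), the r x r matrix F'F (entries (fs!i) . (fs!j)),
  and its determinant.\<close>
definition gram_mat :: "(real^'n) list \<Rightarrow> real Matrix.mat" where
  "gram_mat fs = Matrix.mat (length fs) (length fs) (\<lambda>(i,j). inner (fs ! i) (fs ! j))"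

definition gram_det :: "(real^'n) list \<Rightarrow> real" where
  "gram_det fs = Determinant.det (gram_mat fs)"

text \<open>fs lists (without repetition) the columns of a matrix F whose columns form a maximal
  linearly independent subset of the set V.\<close>
definition max_indep_cols :: "(real^'n) set \<Rightarrow> (real^'n) list \<Rightarrow> bool" where
  "max_indep_cols V fs \<longleftrightarrow> distinct fs \<and> set fs \<subseteq> V \<and> independent (set fs) \<and>
     (\<forall>x\<in>V. x \<notin> set fs \<longrightarrow> dependent (insert x (set fs)))"

end

theory Submission
  imports Defs
begin

text \<open>Choose the columns greedily: \<open>v\<^sub>j\<close> is kept iff it is not in the span of the vectors
  kept before it. By induction on \<open>j\<close>, \<open>\<parallel>Q\<^sub>j y\<parallel>\<^sup>2 \<le> (1 - det (F\<^sub>j' F\<^sub>j)) \<parallel>y\<parallel>\<^sup>2\<close> for \<open>y\<close> in the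
  span of \<open>v\<^sub>1, \<dots>, v\<^sub>j\<close>, where \<open>F\<^sub>j\<close> has the columns kept so far. If the next vector is
  redundant, the extra projection can only shrink norms. Otherwise split it as \<open>p + q\<close> with \<open>p\<close>
  in the old span and \<open>q\<close> orthogonal to it: the Gram determinant is multiplied by \<open>\<parallel>q\<parallel>\<^sup>2\<close>,
  \<open>Q\<^sub>j\<close> fixes \<open>q\<close> and preserves the old span, and Cauchy-Schwarz for \<open>\<langle>p, Q\<^sub>j u\<rangle>\<close> reduces
  the new bound to an inequality between real numbers. The minimum over all maximal independent
  subsets is at most the determinant of the greedy one.\<close>

lemma gram_mat_lincomb:
  fixes ws :: "(real^'n) list" and E :: "real Matrix.mat"
  assumes E: "E \<in> carrier_mat m m" and len: "length ws = m"
  shows "gram_mat (map (\<lambda>j. \<Sum>k<m. E $$ (k,j) *\<^sub>R ws!k) [0..<m])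
         = transpose_mat E * gram_mat ws * E"
proof (rule eq_matI)
  fix i j assume "i < dim_row (transpose_mat E * gram_mat ws * E)"
    and "j < dim_col (transpose_mat E * gram_mat ws * E)"
  then have i: "i < m" and j: "j < m" using E by auto
  have "(transpose_mat E * gram_mat ws * E) $$ (i,j)
      = (\<Sum>l<m. (\<Sum>k<m. E $$ (k,i) * inner (ws!k) (ws!l)) * E $$ (l,j))"
    using E len i j by (simp add: gram_mat_def scalar_prod_def Matrix.row_def col_def atLeast0LessThan)
  also have "\<dots> = inner (\<Sum>k<m. E $$ (k,i) *\<^sub>R ws!k) (\<Sum>l<m. E $$ (l,j) *\<^sub>R ws!l)"
    by (simp add: inner_sum_left inner_sum_right sum_distrib_left sum_distrib_right mult_ac)
  finally show "gram_mat (map (\<lambda>j. \<Sum>k<m. E $$ (k,j) *\<^sub>R ws!k) [0..<m]) $$ (i,j)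
      = (transpose_mat E * gram_mat ws * E) $$ (i,j)"
    using i j by (simp add: gram_mat_def)
qed (use E len in \<open>simp_all add: gram_mat_def\<close>)

lemma gram_det_append_orthogonal:
  fixes fs :: "(real^'n) list"
  assumes orth: "\<And>f. f \<in> set fs \<Longrightarrow> inner q f = 0"
  shows "gram_det (fs @ [q]) = gram_det fs * (norm q)\<^sup>2"
proof -
  let ?r = "length fs"
  have "gram_mat (fs @ [q])
      = four_block_mat (gram_mat fs) (0\<^sub>m ?r 1) (0\<^sub>m 1 ?r) (Matrix.mat 1 1 (\<lambda>_. inner q q))"
    using orth[OF nth_mem] orth[OF nth_mem, THEN inner_commute[THEN trans]]
    by (auto intro!: eq_matI simp: gram_mat_def nth_append)
  then have "gram_det (fs @ [q]) = gram_det fs * Determinant.det (Matrix.mat 1 1 (\<lambda>_. inner q q))"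
    unfolding gram_det_def
    by (simp only:) (rule det_four_block_mat_lower_left_zero, auto simp: gram_mat_def)
  then show ?thesis by (simp add: det_single power2_norm_eq_inner)
qed

text \<open>Adding to the last column a combination of the others is a unimodular column operation.\<close>

lemma gram_det_append_add_span:
  fixes fs :: "(real^'n) list"
  assumes dist: "distinct fs" and p: "p \<in> span (set fs)"
  shows "gram_det (fs @ [p + q]) = gram_det (fs @ [q])"
proof -
  let ?r = "length fs"
  let ?ws = "fs @ [q]"
  obtain u where "p = (\<Sum>x\<in>set fs. u x *\<^sub>R x)"
    using p span_finite[of "set fs"] by auto
  also have "\<dots> = (\<Sum>k<?r. u (fs!k) *\<^sub>R fs!k)"
    using sum.reindex_bij_betw[OF bij_betw_nth[OF dist refl refl], of "\<lambda>x. u x *\<^sub>R x"] by simp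
  finally have pu: "p = (\<Sum>k<?r. u (fs!k) *\<^sub>R fs!k)" .
  define E where "E = Matrix.mat (?r+1) (?r+1)
    (\<lambda>(i,j). if i = j then 1 else if j = ?r then u (fs!i) else (0::real))"
  have Ec: "E \<in> carrier_mat (?r+1) (?r+1)" by (simp add: E_def)
  have cols: "map (\<lambda>j. \<Sum>k<?r+1. E $$ (k,j) *\<^sub>R ?ws!k) [0..<?r+1] = fs @ [p + q]"
  proof (rule nth_equalityI)
    fix j assume "j < length (map (\<lambda>j. \<Sum>k<?r+1. E $$ (k,j) *\<^sub>R ?ws!k) [0..<?r+1])"
    then have j: "j < ?r + 1" by simp
    show "map (\<lambda>j. \<Sum>k<?r+1. E $$ (k,j) *\<^sub>R ?ws!k) [0..<?r+1] ! j = (fs @ [p + q]) ! j"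
    proof (cases "j = ?r")
      case True
      then show ?thesis by (simp add: E_def pu nth_append del: upt_Suc)
    next
      case False
      then have "(\<Sum>k<?r+1. E $$ (k,j) *\<^sub>R ?ws!k) = (\<Sum>k<?r+1. if k = j then ?ws!k else 0)"
        using j by (intro sum.cong) (auto simp: E_def)
      then show ?thesis using j False by (simp add: nth_append del: upt_Suc)
    qed
  qed simp
  have "diag_mat E = map (\<lambda>_. 1) [0..<?r+1]"
    unfolding diag_mat_def by (rule map_cong) (auto simp: E_def)
  then have detE: "Determinant.det E = 1"
    using det_upper_triangular[OF _ Ec]
    by (simp add: upper_triangular_def E_def map_replicate_const del: upt_Suc)
  have "gram_det (fs @ [p + q]) = Determinant.det (transpose_mat E * gram_mat ?ws * E)"
    unfolding gram_det_def using gram_mat_lincomb[OF Ec, of ?ws] cols by simp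
  also have "\<dots> = gram_det ?ws"
    using Ec detE det_transpose[OF Ec] by (simp add: det_mult[of _ "?r+1"] gram_mat_def gram_det_def)
  finally show ?thesis .
qed

lemma norm_sub_unit_projection:
  fixes w x :: "'a::real_inner"
  assumes "norm w = 1"
  shows "(norm (x - inner w x *\<^sub>R w))\<^sup>2 = (norm x)\<^sup>2 - (inner w x)\<^sup>2"
proof -
  have "inner w w = 1" using assms by (simp add: dot_square_norm)
  then show ?thesis
    unfolding power2_norm_eq_inner
    by (simp add: inner_diff_left inner_diff_right inner_commute power2_eq_square)
qed

lemma norm_add_scaled_orthogonal:
  fixes a q :: "'a::real_inner"
  assumes "inner a q = 0"
  shows "(norm (a + t *\<^sub>R q))\<^sup>2 = (norm a)\<^sup>2 + t\<^sup>2 * (norm q)\<^sup>2"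
  using assms unfolding power2_norm_eq_inner
  by (simp add: inner_add_left inner_add_right inner_commute power2_eq_square)

text \<open>With \<open>c = 1 - g\<close>, the claim times \<open>c\<close> is the sum of the three nonnegative terms
  \<open>(1 - s + c s)(c U - A)\<close>, \<open>(1 - c)((1 - s) A - d\<^sup>2)\<close> and \<open>(d + c L s)\<^sup>2\<close>.\<close>

lemma projection_step_inequality:
  fixes A U L s d g :: real
  assumes g: "0 \<le> g" "g \<le> 1" and s: "0 \<le> s" "s \<le> 1" and U: "0 \<le> U"
    and AU: "A \<le> (1 - g) * U" and dA: "d\<^sup>2 \<le> (1 - s) * A"
  shows "A + L\<^sup>2 * s - (d + L * s)\<^sup>2 \<le> (1 - g * s) * (U + L\<^sup>2 * s)"
proof (cases "g = 1")
  case True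
  then have "(1 - s) * A \<le> 0" using AU s by (simp add: mult_nonneg_nonpos)
  then have "d\<^sup>2 \<le> 0" using dA by linarith
  then have "d = 0" by simp
  moreover have "0 \<le> (1 - s) * U" using s U by simp
  ultimately show ?thesis using True AU by (simp add: algebra_simps power2_eq_square)
next
  case False
  define c where "c = 1 - g"
  have c: "0 < c" "c \<le> 1" using g False by (auto simp: c_def)
  have "c * ((1 - g * s) * (U + L\<^sup>2 * s) - (A + L\<^sup>2 * s - (d + L * s)\<^sup>2))
      = (1 - s + c * s) * (c * U - A) + (1 - c) * ((1 - s) * A - d\<^sup>2) + (d + c * L * s)\<^sup>2"
    by (simp add: c_def power2_eq_square algebra_simps)
  also have "\<dots> \<ge> 0"
    using c s AU dA by (intro add_nonneg_nonneg mult_nonneg_nonneg) (auto simp: c_def)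
  finally show ?thesis using c by (simp add: zero_le_mult_iff)
qed

text \<open>In the application \<open>a = Q u\<close>, where \<open>Q\<close> is the product of the earlier projections and
  \<open>p\<close>, \<open>u\<close>, \<open>a\<close> lie in the span of the earlier vectors.\<close>

lemma norm_project_out_unit_le:
  fixes a u p q :: "'a::real_inner"
  assumes w: "norm (p + q) = 1" and orth: "inner p q = 0" "inner a q = 0" "inner u q = 0"
    and a: "(norm a)\<^sup>2 \<le> (1 - g) * (norm u)\<^sup>2" and g: "0 \<le> g" "g \<le> 1"
  shows "(norm ((a + t *\<^sub>R q) - inner (p + q) (a + t *\<^sub>R q) *\<^sub>R (p + q)))\<^sup>2
    \<le> (1 - g * (norm q)\<^sup>2) * (norm (u + t *\<^sub>R q))\<^sup>2"
proof -
  let ?s = "(norm q)\<^sup>2"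
  have pq: "(norm p)\<^sup>2 = 1 - ?s"
    using w norm_add_scaled_orthogonal[OF orth(1), of 1] by simp
  have "inner (p + q) (a + t *\<^sub>R q) = inner p a + t * ?s"
    using orth by (simp add: inner_add_left inner_add_right inner_commute power2_norm_eq_inner)
  moreover have "(inner p a)\<^sup>2 \<le> (1 - ?s) * (norm a)\<^sup>2"
  proof -
    have "(inner p a)\<^sup>2 \<le> (norm p * norm a)\<^sup>2"
      using Cauchy_Schwarz_ineq2[of p a] by (metis abs_ge_zero power2_abs power_mono)
    then show ?thesis by (simp add: power_mult_distrib pq)
  qed
  moreover have "?s \<le> 1" using pq by (metis diff_ge_0_iff_ge zero_le_power2)
  ultimately have "(norm a)\<^sup>2 + t\<^sup>2 * ?s - (inner (p + q) (a + t *\<^sub>R q))\<^sup>2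
      \<le> (1 - g * ?s) * ((norm u)\<^sup>2 + t\<^sup>2 * ?s)"
    using projection_step_inequality[OF g _ _ _ a] by simp
  then show ?thesis
    by (simp only: norm_sub_unit_projection[OF w] norm_add_scaled_orthogonal orth)
qed

lemma outer_sq_mult_vec: "outer_sq w *v x = inner w x *\<^sub>R w"
  by (simp add: Finite_Cartesian_Product.vec_eq_iff outer_sq_def matrix_vector_mult_def inner_vec_def
      sum_distrib_left sum_distrib_right mult_ac)

lemma Qprod_Suc_mult_vec:
  "Qprod v (Suc m) *v x = Qprod v m *v x - inner (v (Suc m)) (Qprod v m *v x) *\<^sub>R v (Suc m)"
  by (simp add: matrix_vector_mul_assoc[symmetric] matrix_vector_mult_diff_rdistrib outer_sq_mult_vec)

lemma Qprod_mult_vec_in_span: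
  assumes "\<And>i. i \<in> {1..m} \<Longrightarrow> v i \<in> span T" and "x \<in> span T"
  shows "Qprod v m *v x \<in> span T"
  using assms
  by (induction m) (auto simp: Qprod_Suc_mult_vec simp del: Qprod.simps(2) intro: span_diff span_scale)

lemma Qprod_mult_vec_orthogonal:
  assumes "\<And>i. i \<in> {1..m} \<Longrightarrow> inner (v i) z = 0"
  shows "Qprod v m *v z = z"
  using assms by (induction m) (auto simp: Qprod_Suc_mult_vec simp del: Qprod.simps(2))

lemma norm_Qprod_Suc_le:
  assumes "norm (v (Suc m)) = 1"
  shows "(norm (Qprod v (Suc m) *v x))\<^sup>2 \<le> (norm (Qprod v m *v x))\<^sup>2"
  unfolding Qprod_Suc_mult_vec norm_sub_unit_projection[OF assms] by simp

lemma Qprod_Suc_bound_orthogonal_split: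
  fixes v :: "nat \<Rightarrow> real^'n" and k :: nat and T :: "(real^'n) set"
  assumes w: "norm (v (Suc k)) = 1" "v (Suc k) = p + q"
    and p: "p \<in> span T" and q: "\<And>z. z \<in> span T \<Longrightarrow> inner z q = 0"
    and V: "\<And>i. i \<in> {1..k} \<Longrightarrow> v i \<in> span T" and g: "0 \<le> g" "g \<le> 1"
    and bound: "\<And>u. u \<in> span T \<Longrightarrow> (norm (Qprod v k *v u))\<^sup>2 \<le> (1 - g) * (norm u)\<^sup>2"
    and y: "y \<in> span (insert (v (Suc k)) T)"
  shows "(norm (Qprod v (Suc k) *v y))\<^sup>2 \<le> (1 - g * (norm q)\<^sup>2) * (norm y)\<^sup>2"
proof -
  obtain t where "y - t *\<^sub>R v (Suc k) \<in> span T"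
    using y span_breakdown_eq by blast
  moreover have "y - t *\<^sub>R q = (y - t *\<^sub>R v (Suc k)) + t *\<^sub>R p"
    by (simp add: w(2) algebra_simps)
  ultimately have "y - t *\<^sub>R q \<in> span T"
    using p by (metis span_add span_scale)
  then obtain u where u: "u \<in> span T" and y_eq: "y = u + t *\<^sub>R q"
    by (metis diff_add_cancel)
  define a where "a = Qprod v k *v u"
  have a: "a \<in> span T"
    unfolding a_def using V u by (rule Qprod_mult_vec_in_span)
  have "Qprod v k *v q = q"
    by (rule Qprod_mult_vec_orthogonal) (simp add: q V)
  then have "Qprod v k *v y = a + t *\<^sub>R q"
    unfolding a_def y_eq by (simp add: matrix_vector_right_distrib matrix_vector_mult_scaleR)
  then have "(norm (Qprod v (Suc k) *v y))\<^sup>2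
      = (norm ((a + t *\<^sub>R q) - inner (p + q) (a + t *\<^sub>R q) *\<^sub>R (p + q)))\<^sup>2"
    by (simp add: Qprod_Suc_mult_vec w(2) del: Qprod.simps(2))
  also have "\<dots> \<le> (1 - g * (norm q)\<^sup>2) * (norm y)\<^sup>2"
    unfolding y_eq using w q[OF p] q[OF a] q[OF u] bound[OF u] g
    by (intro norm_project_out_unit_le) (simp_all add: a_def)
  finally show ?thesis .
qed

lemma Qprod_Suc_bound_append:
  fixes v :: "nat \<Rightarrow> real^'n" and k :: nat and fs :: "(real^'n) list"
  assumes w: "norm (v (Suc k)) = 1"
    and fs: "distinct fs" "\<And>i. i \<in> {1..k} \<Longrightarrow> v i \<in> span (set fs)"
    and g: "0 \<le> gram_det fs" "gram_det fs \<le> 1"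
    and bound: "\<And>u. u \<in> span (set fs) \<Longrightarrow>
      (norm (Qprod v k *v u))\<^sup>2 \<le> (1 - gram_det fs) * (norm u)\<^sup>2"
  shows "0 \<le> gram_det (fs @ [v (Suc k)]) \<and> gram_det (fs @ [v (Suc k)]) \<le> 1 \<and>
    (\<forall>y \<in> span (insert (v (Suc k)) (set fs)).
      (norm (Qprod v (Suc k) *v y))\<^sup>2 \<le> (1 - gram_det (fs @ [v (Suc k)])) * (norm y)\<^sup>2)"
proof -
  obtain p q where p: "p \<in> span (set fs)" and w_eq: "v (Suc k) = p + q"
    and "\<And>z. z \<in> span (set fs) \<Longrightarrow> real_inner_class.orthogonal q z"
    using orthogonal_subspace_decomp_exists[of "set fs" "v (Suc k)"] by metis
  then have q: "\<And>z. z \<in> span (set fs) \<Longrightarrow> inner z q = 0"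
    by (simp add: real_inner_class.orthogonal_def inner_commute)
  have gram: "gram_det (fs @ [v (Suc k)]) = gram_det fs * (norm q)\<^sup>2"
    unfolding w_eq gram_det_append_add_span[OF fs(1) p]
    by (rule gram_det_append_orthogonal) (simp add: q span_base inner_commute)
  have "(norm p)\<^sup>2 + (norm q)\<^sup>2 = 1"
    using w norm_add_scaled_orthogonal[OF q[OF p], of 1] unfolding w_eq by simp
  then have "(norm q)\<^sup>2 \<le> 1"
    by (metis le_add_same_cancel2 zero_le_power2)
  then show ?thesis
    using Qprod_Suc_bound_orthogonal_split[OF w w_eq p q fs(2) g bound] g
    by (simp add: gram mult_le_one)
qed

lemma max_indep_cols_iff:
  "max_indep_cols V fs \<longleftrightarrow>
    distinct fs \<and> set fs \<subseteq> V \<and> independent (set fs) \<and> V \<subseteq> span (set fs)"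
proof -
  have "dependent (insert x (set fs)) \<longleftrightarrow> x \<in> span (set fs)"
    if "independent (set fs)" "x \<notin> set fs" for x
    using that independent_insert[of x "set fs"] by auto
  then show ?thesis
    unfolding max_indep_cols_def by (blast intro: span_base)
qed

lemma max_indep_cols_span:
  assumes "max_indep_cols V fs"
  shows "span (set fs) = span V"
  using assms unfolding max_indep_cols_iff by (metis span_mono span_span subset_antisym span_minimal subspace_span)

lemma max_indep_cols_insert_in_span:
  assumes "max_indep_cols V fs" and "w \<in> span (set fs)"
  shows "max_indep_cols (insert w V) fs"
  using assms unfolding max_indep_cols_iff by blast

lemma max_indep_cols_insert_notin_span:
  assumes "max_indep_cols V fs" and "w \<notin> span (set fs)"
  shows "max_indep_cols (insert w V) (fs @ [w])"
  using assms unfolding max_indep_cols_iff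
  by (auto simp: independent_insert span_base intro: span_mono[THEN subsetD, rotated])

lemma finite_max_indep_cols:
  assumes "finite V"
  shows "finite {fs. max_indep_cols V fs}"
proof (rule finite_subset)
  show "{fs. max_indep_cols V fs} \<subseteq> {fs. set fs \<subseteq> V \<and> length fs \<le> card V}"
    using assms by (auto simp: max_indep_cols_def distinct_card[symmetric] card_mono)
  show "finite {fs. set fs \<subseteq> V \<and> length fs \<le> card V}"
    using assms by (rule finite_lists_length_le)
qed

lemma Qprod_bound_greedy_max_indep_cols:
  fixes v :: "nat \<Rightarrow> real^'n"
  assumes "\<And>i. i \<in> {1..k} \<Longrightarrow> norm (v i) = 1"
  shows "\<exists>fs. max_indep_cols (v ` {1..k}) fs \<and> 0 \<le> gram_det fs \<and> gram_det fs \<le> 1 \<and>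
    (\<forall>y \<in> span (v ` {1..k}). (norm (Qprod v k *v y))\<^sup>2 \<le> (1 - gram_det fs) * (norm y)\<^sup>2)"
  using assms
proof (induction k)
  case 0
  have "gram_det ([] :: (real^'n) list) = 1"
    by (simp add: gram_det_def gram_mat_def)
  then show ?case
    by (intro exI[of _ "[]"]) (auto simp: max_indep_cols_iff independent_empty)
next
  case (Suc k)
  let ?V = "v ` {1..k}" and ?w = "v (Suc k)"
  have "\<And>i. i \<in> {1..k} \<Longrightarrow> norm (v i) = 1"
    using Suc.prems by simp
  then obtain fs where fs: "max_indep_cols ?V fs" and g: "0 \<le> gram_det fs" "gram_det fs \<le> 1"
    and bound: "\<forall>y \<in> span ?V. (norm (Qprod v k *v y))\<^sup>2 \<le> (1 - gram_det fs) * (norm y)\<^sup>2"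
    using Suc.IH by blast
  have V: "v ` {1..Suc k} = insert ?w ?V"
    by (auto simp: atLeastAtMostSuc_conv)
  have span_fs: "span (set fs) = span ?V"
    using fs by (rule max_indep_cols_span)
  have w: "norm ?w = 1" using Suc.prems by simp
  show ?case
  proof (cases "?w \<in> span (set fs)")
    case True
    have span_eq: "span (v ` {1..Suc k}) = span ?V"
      unfolding V using True span_fs by (simp add: span_redundant)
    have "(norm (Qprod v (Suc k) *v y))\<^sup>2 \<le> (1 - gram_det fs) * (norm y)\<^sup>2"
      if "y \<in> span (v ` {1..Suc k})" for y
      by (rule order_trans[OF norm_Qprod_Suc_le[of v k y, OF w]]) (use that bound span_eq in auto)
    then show ?thesis
      using max_indep_cols_insert_in_span[OF fs True] g unfolding V
      by (intro exI[of _ fs]) simp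
  next
    case False
    have span_eq: "span (insert ?w ?V) = span (insert ?w (set fs))"
      by (simp only: span_insert span_fs)
    have in_span: "v i \<in> span (set fs)" if "i \<in> {1..k}" for i
      using that by (simp add: span_fs span_base)
    have "distinct fs"
      using fs by (simp add: max_indep_cols_def)
    then have "0 \<le> gram_det (fs @ [?w]) \<and> gram_det (fs @ [?w]) \<le> 1 \<and>
      (\<forall>y \<in> span (insert ?w (set fs)).
        (norm (Qprod v (Suc k) *v y))\<^sup>2 \<le> (1 - gram_det (fs @ [?w])) * (norm y)\<^sup>2)"
      using bound span_fs by (intro Qprod_Suc_bound_append[of v k fs, OF w _ in_span g]) auto
    then show ?thesis
      unfolding V span_eq using max_indep_cols_insert_notin_span[OF fs False] by blast
  qed
qed

theorem mainTheorem9: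
  fixes v :: "nat \<Rightarrow> real^'n" and k :: nat
  assumes unit: "\<And>i. i \<in> {1..k} \<Longrightarrow> norm (v i) = 1"
  shows "\<forall>y \<in> span (v ` {1..k}). norm y = 1 \<longrightarrow>
           norm (Qprod v k *v y)
             \<le> sqrt (1 - Min {gram_det fs | fs. max_indep_cols (v ` {1..k}) fs})"
proof (intro ballI impI)
  let ?V = "v ` {1..k}"
  fix y assume y: "y \<in> span ?V" "norm y = 1"
  obtain fs where fs: "max_indep_cols ?V fs"
    and bound: "\<forall>y \<in> span ?V. (norm (Qprod v k *v y))\<^sup>2 \<le> (1 - gram_det fs) * (norm y)\<^sup>2"
    using Qprod_bound_greedy_max_indep_cols[of k v] unit by blast
  have "finite {gram_det fs | fs. max_indep_cols ?V fs}"
    using finite_max_indep_cols[of ?V] by (simp add: setcompr_eq_image)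
  then have "Min {gram_det fs | fs. max_indep_cols ?V fs} \<le> gram_det fs"
    using fs by (intro Min_le) auto
  moreover have "(norm (Qprod v k *v y))\<^sup>2 \<le> 1 - gram_det fs"
    using bound[rule_format, OF y(1)] y(2) by simp
  ultimately have "(norm (Qprod v k *v y))\<^sup>2 \<le> 1 - Min {gram_det fs | fs. max_indep_cols ?V fs}"
    by linarith
  then show "norm (Qprod v k *v y) \<le> sqrt (1 - Min {gram_det fs | fs. max_indep_cols ?V fs})"
    by (rule real_le_rsqrt)
qed

end
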